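(* Let $D$ be an acyclic digraph, let $G$ be an induced subgraph of $P(D)$, and let $H$ be a subgraph of $G$ such that (i) every maximal clique of $H$ is also a maximal clique of $G$; (ii) any maximal clique of $G$ belonging to $H$ and any maximal clique of $G$ not belonging to $H$ share at most one vertex. Let $$X=\{x \in V(H) \cup (V(D)\setminus V(G)) : N_D^-[x] \cap V(H) \text{ is a clique of size at least two in } H\},$$ and let $D^*$ be the digraph with vertex set $V(D^* ) = V(H) \cup (V(D)\setminus V(G))$ and arc set $$A(D^* )=\bigcup_{x \in X} \left[N_D^-[x] \cap V(H),\{x\}\right]_D .$$ Then $P(D^* )$ contains $H$ as an induced subgraph.
   Context: All graphs are finite and simple. For an acyclic digraph $D$, the phylogeny graph $P(D)$ is the graph on $V(D)$ in which distinct vertices $u,v$ are adjacent if and only if $(u,v)\in A(D)$, or $(v,u)\in A(D)$, or there is a vertex $w$ with $(u,w),(v,w)\in A(D)$. For a vertex $x$ of a digraph $D$, $N_D^-[x]$ denotes the closed in-neighborhood $\{x\}\cup\{u : (u,x)\in A(D)\}$. For vertex sets $U,V$ of $D$, $[U,V]_D$ denotes the set of arcs of $D$ with tail in $U$ and head in $V$. A clique of $G$ "belongs to $H$" if it is a clique of $H$ (all its vertices are in $V(H)$ and all edges among them are in $E(H)$). *)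

theory Defs
  imports Main
begin

definition digraph :: "'a set \<Rightarrow> ('a \<times> 'a) set \<Rightarrow> bool" where
  "digraph V A \<longleftrightarrow> finite V \<and> A \<subseteq> V \<times> V"

definition acyclic_digraph :: "'a set \<Rightarrow> ('a \<times> 'a) set \<Rightarrow> bool" where
  "acyclic_digraph V A \<longleftrightarrow> digraph V A \<and> acyclic A"

definition graph :: "'a set \<Rightarrow> 'a set set \<Rightarrow> bool" where
  "graph V E \<longleftrightarrow> finite V \<and> (\<forall>e\<in>E. e \<subseteq> V \<and> card e = 2)"

text \<open>Edge set of the phylogeny graph P(D) (its vertex set is V(D)).\<close>
definition phylo_edges :: "'a set \<Rightarrow> ('a \<times> 'a) set \<Rightarrow> 'a set set" where
  "phylo_edges V A = {{u, v} | u v. u \<in> V \<and> v \<in> V \<and> u \<noteq> v \<and>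
     ((u, v) \<in> A \<or> (v, u) \<in> A \<or> (\<exists>w. (u, w) \<in> A \<and> (v, w) \<in> A))}"

definition induced_subgraph :: "'a set \<Rightarrow> 'a set set \<Rightarrow> 'a set \<Rightarrow> 'a set set \<Rightarrow> bool" where
  "induced_subgraph VH EH VG EG \<longleftrightarrow> VH \<subseteq> VG \<and> EH = {e \<in> EG. e \<subseteq> VH}"

definition subgraph :: "'a set \<Rightarrow> 'a set set \<Rightarrow> 'a set \<Rightarrow> 'a set set \<Rightarrow> bool" where
  "subgraph VH EH VG EG \<longleftrightarrow> graph VH EH \<and> VH \<subseteq> VG \<and> EH \<subseteq> EG"

definition clique :: "'a set \<Rightarrow> 'a set set \<Rightarrow> 'a set \<Rightarrow> bool" where
  "clique V E K \<longleftrightarrow> K \<noteq> {} \<and> K \<subseteq> V \<and> (\<forall>u\<in>K. \<forall>v\<in>K. u \<noteq> v \<longrightarrow> {u, v} \<in> E)"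

definition maximal_clique :: "'a set \<Rightarrow> 'a set set \<Rightarrow> 'a set \<Rightarrow> bool" where
  "maximal_clique V E K \<longleftrightarrow> clique V E K \<and> (\<forall>K'. clique V E K' \<and> K \<subseteq> K' \<longrightarrow> K' = K)"

definition closed_in_nbhd :: "('a \<times> 'a) set \<Rightarrow> 'a \<Rightarrow> 'a set" where
  "closed_in_nbhd A x = insert x {u. (u, x) \<in> A}"

definition arcs_between :: "('a \<times> 'a) set \<Rightarrow> 'a set \<Rightarrow> 'a set \<Rightarrow> ('a \<times> 'a) set" where
  "arcs_between A U W = {(u, w) \<in> A. u \<in> U \<and> w \<in> W}"

definition Xset :: "'a set \<Rightarrow> ('a \<times> 'a) set \<Rightarrow> 'a set \<Rightarrow> 'a set \<Rightarrow> 'a set set \<Rightarrow> 'a set" where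
  "Xset VD AD VG VH EH = {x \<in> VH \<union> (VD - VG).
      clique VH EH (closed_in_nbhd AD x \<inter> VH) \<and> card (closed_in_nbhd AD x \<inter> VH) \<ge> 2}"

end

theory Submission
  imports Defs
begin

text \<open>Two vertices are adjacent in P(D) exactly when they lie in a common closed in-neighbourhood.
An edge uv of H lies in some N^-_D[x]; the clique N^-_D[x] \<inter> V(G) of G and a maximal clique of H
through uv extend to maximal cliques of G sharing u and v, so by (ii) the former belongs to H.
Hence N^-_D[x] \<inter> V(H) = N^-_D[x] \<inter> V(G) is a clique of H of size at least two, x \<in> X, and
u, v stay in the closed in-neighbourhood of x in D^*. Conversely, inside V(H) the closed
in-neighbourhoods in D^* are those N^-_D[x] \<inter> V(H) with x \<in> X, which are cliques of H.\<close>

lemma clique_subset: "clique V E K \<Longrightarrow> K' \<subseteq> K \<Longrightarrow> K' \<noteq> {} \<Longrightarrow> clique V E K'"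
  unfolding clique_def by blast

lemma clique_extends_to_maximal_clique:
  assumes "finite V" "clique V E K"
  obtains K' where "maximal_clique V E K'" "K \<subseteq> K'"
proof -
  let ?P = "\<lambda>K'. clique V E K' \<and> K \<subseteq> K'"
  have "\<forall>K'. ?P K' \<longrightarrow> card K' < Suc (card V)"
    using assms(1) by (metis clique_def card_mono le_imp_less_Suc)
  then obtain M where M: "?P M" "\<forall>K'. ?P K' \<longrightarrow> card K' \<le> card M"
    using ex_has_greatest_nat[of ?P K card "Suc (card V)"] assms(2) by blast
  have "maximal_clique V E M"
    unfolding maximal_clique_def
  proof (intro conjI allI impI)
    show "clique V E M" using M by blast
    fix K' assume K': "clique V E K' \<and> M \<subseteq> K'"
    then have "card K' \<le> card M" using M by blast
    moreover have "finite K'" using K' assms(1) by (auto simp: clique_def intro: finite_subset)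
    ultimately show "K' = M" using K' card_seteq by blast
  qed
  with M that show ?thesis by blast
qed

lemma phylo_edges_iff_common_closed_in_nbhd:
  "{u, v} \<in> phylo_edges V A \<longleftrightarrow>
     u \<noteq> v \<and> u \<in> V \<and> v \<in> V \<and> (\<exists>x. u \<in> closed_in_nbhd A x \<and> v \<in> closed_in_nbhd A x)"
proof
  assume "{u, v} \<in> phylo_edges V A"
  then obtain a b where ab: "{u, v} = {a, b}" "a \<in> V" "b \<in> V" "a \<noteq> b"
    "(a, b) \<in> A \<or> (b, a) \<in> A \<or> (\<exists>w. (a, w) \<in> A \<and> (b, w) \<in> A)"
    unfolding phylo_edges_def by blast
  then have "\<exists>x. a \<in> closed_in_nbhd A x \<and> b \<in> closed_in_nbhd A x"
    unfolding closed_in_nbhd_def by blast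
  with ab(1-4) show "u \<noteq> v \<and> u \<in> V \<and> v \<in> V \<and> (\<exists>x. u \<in> closed_in_nbhd A x \<and> v \<in> closed_in_nbhd A x)"
    by (auto simp: doubleton_eq_iff)
next
  assume "u \<noteq> v \<and> u \<in> V \<and> v \<in> V \<and> (\<exists>x. u \<in> closed_in_nbhd A x \<and> v \<in> closed_in_nbhd A x)"
  then show "{u, v} \<in> phylo_edges V A"
    unfolding phylo_edges_def closed_in_nbhd_def by blast
qed

lemma closed_in_nbhd_clique_of_induced_phylo:
  assumes "induced_subgraph VG EG V (phylo_edges V A)" "closed_in_nbhd A x \<inter> VG \<noteq> {}"
  shows "clique VG EG (closed_in_nbhd A x \<inter> VG)"
  using assms phylo_edges_iff_common_closed_in_nbhd[of _ _ V A]
  unfolding clique_def induced_subgraph_def by blast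

lemma mem_closed_in_nbhd_union_arcs_between:
  assumes "w \<in> W"
  shows "w \<in> closed_in_nbhd (\<Union>y\<in>X. arcs_between A (closed_in_nbhd A y \<inter> W) {y}) x \<longleftrightarrow>
     (if x \<in> X then w \<in> closed_in_nbhd A x else w = x)"
  using assms unfolding closed_in_nbhd_def arcs_between_def by auto

lemma common_closed_in_nbhd_union_arcs_between:
  assumes "u \<in> W" "v \<in> W" "u \<noteq> v"
  shows "(\<exists>x. u \<in> closed_in_nbhd (\<Union>y\<in>X. arcs_between A (closed_in_nbhd A y \<inter> W) {y}) x \<and>
              v \<in> closed_in_nbhd (\<Union>y\<in>X. arcs_between A (closed_in_nbhd A y \<inter> W) {y}) x)
     \<longleftrightarrow> (\<exists>x\<in>X. u \<in> closed_in_nbhd A x \<and> v \<in> closed_in_nbhd A x)"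
  using assms by (simp add: mem_closed_in_nbhd_union_arcs_between) metis

lemma clique_through_edge_of_subgraph:
  assumes "finite VG" "subgraph VH EH VG EG"
    and i: "\<And>K. maximal_clique VH EH K \<Longrightarrow> maximal_clique VG EG K"
    and ii: "\<And>K1 K2. maximal_clique VG EG K1 \<Longrightarrow> clique VH EH K1 \<Longrightarrow>
               maximal_clique VG EG K2 \<Longrightarrow> \<not> clique VH EH K2 \<Longrightarrow> card (K1 \<inter> K2) \<le> 1"
    and C: "clique VG EG C" and uv: "{u, v} \<in> EH" "u \<noteq> v" "u \<in> C" "v \<in> C"
  shows "clique VH EH C"
proof -
  have "graph VH EH" using assms(2) by (simp add: subgraph_def)
  then have finH: "finite VH" and "u \<in> VH" "v \<in> VH"
    using uv(1) by (auto simp: graph_def)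
  then have "clique VH EH {u, v}"
    using uv(1) by (auto simp: clique_def insert_commute)
  then obtain K1 where K1: "maximal_clique VH EH K1" "{u, v} \<subseteq> K1"
    using clique_extends_to_maximal_clique[OF finH] by blast
  then have K1H: "clique VH EH K1" by (simp add: maximal_clique_def)
  obtain K2 where K2: "maximal_clique VG EG K2" "C \<subseteq> K2"
    using clique_extends_to_maximal_clique[OF assms(1) C] by blast
  have "clique VH EH K2"
  proof (rule ccontr)
    assume "\<not> clique VH EH K2"
    with i[OF K1(1)] K1H K2(1) have "card (K1 \<inter> K2) \<le> 1" by (rule ii)
    moreover have "finite (K1 \<inter> K2)"
      using K1H finH by (auto simp: clique_def intro: finite_subset)
    moreover have "{u, v} \<subseteq> K1 \<inter> K2" using K1 K2 uv by blast
    ultimately show False using card_mono[of "K1 \<inter> K2" "{u, v}"] uv(2) by simp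
  qed
  then show ?thesis using clique_subset K2(2) uv(3) by blast
qed

lemma edge_of_subgraph_in_X_nbhd:
  assumes "digraph VD AD"
    and G: "induced_subgraph VG EG VD (phylo_edges VD AD)"
    and H: "subgraph VH EH VG EG"
    and i: "\<And>K. maximal_clique VH EH K \<Longrightarrow> maximal_clique VG EG K"
    and ii: "\<And>K1 K2. maximal_clique VG EG K1 \<Longrightarrow> clique VH EH K1 \<Longrightarrow>
               maximal_clique VG EG K2 \<Longrightarrow> \<not> clique VH EH K2 \<Longrightarrow> card (K1 \<inter> K2) \<le> 1"
    and uv: "{u, v} \<in> EH" "u \<noteq> v"
  shows "\<exists>x\<in>Xset VD AD VG VH EH. u \<in> closed_in_nbhd AD x \<and> v \<in> closed_in_nbhd AD x"
proof -
  have AD: "AD \<subseteq> VD \<times> VD" and finG: "finite VG"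
    using assms(1) G by (auto simp: digraph_def induced_subgraph_def intro: finite_subset)
  have VH: "VH \<subseteq> VG" and "graph VH EH" and "{u, v} \<in> EG"
    using H uv(1) by (auto simp: subgraph_def)
  then have "u \<in> VG" "v \<in> VG" and finH: "finite VH"
    using uv(1) unfolding graph_def by blast+
  have "{u, v} \<in> phylo_edges VD AD"
    using G \<open>{u, v} \<in> EG\<close> by (simp add: induced_subgraph_def)
  then obtain x where x: "u \<in> closed_in_nbhd AD x" "v \<in> closed_in_nbhd AD x"
    unfolding phylo_edges_iff_common_closed_in_nbhd by blast
  define C where "C = closed_in_nbhd AD x \<inter> VG"
  have uvC: "u \<in> C" "v \<in> C" using x \<open>u \<in> VG\<close> \<open>v \<in> VG\<close> by (auto simp: C_def)
  have "clique VG EG C"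
    using closed_in_nbhd_clique_of_induced_phylo[OF G, of x] uvC by (auto simp: C_def)
  then have CH: "clique VH EH C"
    using clique_through_edge_of_subgraph[OF finG H i ii _ uv uvC] by blast
  then have C_eq: "closed_in_nbhd AD x \<inter> VH = C"
    using VH by (auto simp: C_def clique_def)
  have "finite C" using CH finH by (auto simp: clique_def intro: finite_subset)
  with uvC have "card {u, v} \<le> card C" by (intro card_mono) auto
  then have "card C \<ge> 2" using uv(2) by simp
  moreover have "x \<in> VH \<union> (VD - VG)"
  proof (cases "x \<in> VG")
    case True
    then show ?thesis using CH by (auto simp: C_def closed_in_nbhd_def clique_def)
  next
    case False
    have "x \<in> VD" using x uv(2) AD by (auto simp: closed_in_nbhd_def)
    with False show ?thesis by blast
  qed
  ultimately have "x \<in> Xset VD AD VG VH EH"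
    unfolding Xset_def using CH C_eq by simp
  with x show ?thesis by blast
qed

theorem mainTheorem1:
  fixes VD :: "'a set" and AD :: "('a \<times> 'a) set"
    and VG VH :: "'a set" and EG EH :: "'a set set"
  assumes D: "acyclic_digraph VD AD"
    and G: "induced_subgraph VG EG VD (phylo_edges VD AD)"
    and H: "subgraph VH EH VG EG"
    and i: "\<And>K. maximal_clique VH EH K \<Longrightarrow> maximal_clique VG EG K"
    and ii: "\<And>K1 K2. maximal_clique VG EG K1 \<Longrightarrow> clique VH EH K1 \<Longrightarrow>
               maximal_clique VG EG K2 \<Longrightarrow> \<not> clique VH EH K2 \<Longrightarrow> card (K1 \<inter> K2) \<le> 1"
  defines "VDs \<equiv> VH \<union> (VD - VG)"
    and "ADs \<equiv> (\<Union>x\<in>Xset VD AD VG VH EH. arcs_between AD (closed_in_nbhd AD x \<inter> VH) {x})"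
  shows "induced_subgraph VH EH VDs (phylo_edges VDs ADs)"
proof -
  let ?X = "Xset VD AD VG VH EH"
  have "graph VH EH" using H by (simp add: subgraph_def)
  have Ds_edge_iff: "{u, v} \<in> phylo_edges VDs ADs \<longleftrightarrow>
      u \<noteq> v \<and> (\<exists>x\<in>?X. u \<in> closed_in_nbhd AD x \<and> v \<in> closed_in_nbhd AD x)"
    if "u \<in> VH" "v \<in> VH" for u v
    using that common_closed_in_nbhd_union_arcs_between[OF that, where X = ?X and A = AD]
    unfolding phylo_edges_iff_common_closed_in_nbhd ADs_def VDs_def by blast
  have H_edge_iff: "{u, v} \<in> EH \<longleftrightarrow>
      u \<noteq> v \<and> (\<exists>x\<in>?X. u \<in> closed_in_nbhd AD x \<and> v \<in> closed_in_nbhd AD x)"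
    if "u \<in> VH" "v \<in> VH" for u v
  proof
    assume uv: "{u, v} \<in> EH"
    with \<open>graph VH EH\<close> have "u \<noteq> v" by (auto simp: graph_def)
    with uv D show "u \<noteq> v \<and> (\<exists>x\<in>?X. u \<in> closed_in_nbhd AD x \<and> v \<in> closed_in_nbhd AD x)"
      using edge_of_subgraph_in_X_nbhd[OF _ G H i ii] by (auto simp: acyclic_digraph_def)
  next
    assume "u \<noteq> v \<and> (\<exists>x\<in>?X. u \<in> closed_in_nbhd AD x \<and> v \<in> closed_in_nbhd AD x)"
    with that show "{u, v} \<in> EH" by (auto simp: Xset_def clique_def)
  qed
  have "EH = {e \<in> phylo_edges VDs ADs. e \<subseteq> VH}"
  proof (intro set_eqI iffI)
    fix e assume "e \<in> EH"
    with \<open>graph VH EH\<close> obtain u v where "e = {u, v}" "u \<in> VH" "v \<in> VH"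
      by (auto simp: graph_def card_2_iff)
    with \<open>e \<in> EH\<close> show "e \<in> {e \<in> phylo_edges VDs ADs. e \<subseteq> VH}"
      using Ds_edge_iff H_edge_iff by auto
  next
    fix e assume "e \<in> {e \<in> phylo_edges VDs ADs. e \<subseteq> VH}"
    then obtain u v where "e = {u, v}" "u \<in> VH" "v \<in> VH" "e \<in> phylo_edges VDs ADs"
      unfolding phylo_edges_def by blast
    then show "e \<in> EH" using Ds_edge_iff H_edge_iff by auto
  qed
  then show ?thesis unfolding induced_subgraph_def VDs_def by blast
qed

end
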